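(* Every Hopfian group $G$ has the $d$-equality property: if $H$ is a group with $G\leqslant^d H$ and $H\leqslant^d G$, then $H\cong G$.
   Context: For groups, $X\leqslant^d Y$ means there exist homomorphisms $f:X\to Y$ and $g:Y\to X$ with $g\circ f=\mathrm{id}_X$. A group is Hopfian if every surjective endomorphism of it is an automorphism. *)

theory Defs
  imports "HOL-Algebra.Algebra"
begin

definition d_le :: "('a, 'c) monoid_scheme \<Rightarrow> ('b, 'd) monoid_scheme \<Rightarrow> bool" where
  "d_le A B \<longleftrightarrow> (\<exists>f \<in> hom A B. \<exists>r \<in> hom B A. \<forall>a \<in> carrier A. r (f a) = a)"

definition hopfian :: "('a, 'c) monoid_scheme \<Rightarrow> bool" where
  "hopfian A \<longleftrightarrow> (\<forall>h \<in> hom A A. h ` carrier A = carrier A \<longrightarrow> h \<in> iso A A)"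

end

theory Submission
  imports Defs
begin

(* A retraction is onto, so d-domination in both directions yields surjective homomorphisms
   h : G \<rightarrow> H and k : H \<rightarrow> G. Their composite k \<circ> h is a surjective endomorphism of the
   Hopfian group G, hence injective; therefore h is injective and an isomorphism. *)

lemma d_le_imp_surj_hom:
  assumes "d_le A B"
  obtains r where "r \<in> hom B A" and "r ` carrier B = carrier A"
proof -
  obtain f r where f: "f \<in> hom A B" and r: "r \<in> hom B A" and rf: "\<forall>a \<in> carrier A. r (f a) = a"
    using assms unfolding d_le_def by blast
  have "carrier A \<subseteq> r ` carrier B"
  proof
    fix a assume a: "a \<in> carrier A"
    then have "a = r (f a)" using rf by simp
    moreover have "f a \<in> carrier B" using hom_in_carrier[OF f a] .
    ultimately show "a \<in> r ` carrier B" by (rule image_eqI)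
  qed
  moreover have "r ` carrier B \<subseteq> carrier A"
    using hom_in_carrier[OF r] by blast
  ultimately show thesis
    using r that by blast
qed

lemma hopfian_surj_hom_iso:
  assumes "hopfian G"
    and h: "h \<in> hom G H" "h ` carrier G = carrier H"
    and k: "k \<in> hom H G" "k ` carrier H = carrier G"
  shows "h \<in> iso G H"
proof -
  have "k \<circ> h \<in> hom G G"
    using h(1) k(1) by (simp add: hom_def Pi_iff)
  moreover have "(k \<circ> h) ` carrier G = carrier G"
    using h(2) k(2) by (simp only: image_comp[symmetric])
  ultimately have "k \<circ> h \<in> iso G G"
    using \<open>hopfian G\<close> unfolding hopfian_def by blast
  then have "inj_on h (carrier G)"
    unfolding iso_def bij_betw_def by (blast intro: inj_on_imageI2)
  then show ?thesis
    using h unfolding iso_def bij_betw_def by blast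
qed

theorem proposition3p2:
  fixes G :: "('a, 'c) monoid_scheme" and H :: "('b, 'd) monoid_scheme"
  assumes "group G" and "hopfian G"
    and "group H" and "d_le G H" and "d_le H G"
  shows "H \<cong> G"
proof -
  obtain k where k: "k \<in> hom H G" "k ` carrier H = carrier G"
    using d_le_imp_surj_hom[OF \<open>d_le G H\<close>] .
  obtain h where h: "h \<in> hom G H" "h ` carrier G = carrier H"
    using d_le_imp_surj_hom[OF \<open>d_le H G\<close>] .
  have "G \<cong> H"
    using hopfian_surj_hom_iso[OF \<open>hopfian G\<close> h k] unfolding is_iso_def by blast
  then show ?thesis
    using group.iso_sym[OF \<open>group G\<close>] by blast
qed

end
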